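(* In any two-player perfect-information game, with exact EPFs $U_s$ and bounds $\underline V,\overline V$ as in the context, for every state $s\in\mathcal S$ we have $\{\mu\in\mathbb R: U_s(\mu)>-\infty\}=[\underline V(s),\overline V(s)]$.
   Context: A two-player perfect-information game is a finite rooted tree with states $\mathcal S$. Its leaves $\mathcal L$ carry payoffs $r_1(\ell),r_2(\ell)$ for the leader $\mathsf P_1$ and the follower $\mathsf P_2$. Non-leaf states are partitioned into leader states $\mathcal S_1$ and follower states $\mathcal S_2$, and $\mathcal C(s)$ denotes the children of $s$. Bounds, defined by backward induction: - $\underline V(\ell)=\overline V(\ell)=r_2(\ell)$ for leaves; - $\underline V(s)=\min_{s'\in\mathcal C(s)}\underline V(s')$ for $s\in\mathcal S_1$; - $\underline V(s)=\max_{s'\in\mathcal C(s)}\underline V(s')$ for $s\in\mathcal S_2$; - $\overline V(s)=\max_{s'\in\mathcal C(s)}\overline V(s')$ for every non-leaf $s$. For $s\in\mathcal S_2$ and $s'\in\mathcal C(s)$, let $\tau(s')=\max_{s^!\in\mathcal C(s),s^!\ne s'}\underline V(s^!)$ (the maximum over the empty set is $-\infty$). Let $\beta(s')=\tau(s')$ if the parent of $s'$ is in $\mathcal S_2$, and $-\infty$ if it is in $\mathcal S_1$. Operators, for $g:\mathbb R\to\mathbb R\cup\{-\infty\}$: - $\bigwedge_i g_i$ is the pointwise infimum of all concave $h\ge\max_i g_i$; - $[g\triangleright t](\mu)=g(\mu)$ for $\mu\ge t$ and $-\infty$ otherwise. Exact Enforceable Payoff Frontiers: $U_\ell(\mu)=r_1(\ell)$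 if $\mu=r_2(\ell)$ and $-\infty$ otherwise; $U_s=\bigwedge_{s'\in\mathcal C(s)}(U_{s'}\triangleright\beta(s'))$ for non-leaf $s$. *)

theory Defs
  imports "HOL-Analysis.Analysis" "HOL-Library.Extended_Real"
begin

text \<open>Game trees: a leaf carries the payoffs (r1, r2) of leader and follower;
  an inner node is owned by the leader (P1) or the follower (P2) and has an
  ordered list of children (children at different positions are different states).\<close>

datatype player = P1 | P2

datatype gtree = Leaf real real | Node player "gtree list"

fun wf_game :: "gtree \<Rightarrow> bool" where
  "wf_game (Leaf r1 r2) = True"
| "wf_game (Node p cs) = (cs \<noteq> [] \<and> list_all wf_game cs)"

fun states :: "gtree \<Rightarrow> gtree set" where
  "states (Leaf r1 r2) = {Leaf r1 r2}"
| "states (Node p cs) = insert (Node p cs) (\<Union> (set (map states cs)))"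

fun vlow :: "gtree \<Rightarrow> real" where
  "vlow (Leaf r1 r2) = r2"
| "vlow (Node P1 cs) = Min (set (map vlow cs))"
| "vlow (Node P2 cs) = Max (set (map vlow cs))"

fun vhigh :: "gtree \<Rightarrow> real" where
  "vhigh (Leaf r1 r2) = r2"
| "vhigh (Node p cs) = Max (set (map vhigh cs))"

definition concave_ext :: "(real \<Rightarrow> ereal) \<Rightarrow> bool" where
  "concave_ext h \<longleftrightarrow> convex {(x, r::real). ereal r \<le> h x}"

definition cenv :: "(real \<Rightarrow> ereal) set \<Rightarrow> real \<Rightarrow> ereal" where
  "cenv G \<mu> = Inf {h \<mu> | h. concave_ext h \<and> (\<forall>x. h x < \<infinity>) \<and> (\<forall>g\<in>G. \<forall>x. g x \<le> h x)}"

definition trunc :: "(real \<Rightarrow> ereal) \<Rightarrow> ereal \<Rightarrow> real \<Rightarrow> ereal" where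
  "trunc g t \<mu> = (if ereal \<mu> \<ge> t then g \<mu> else -\<infinity>)"

text \<open>\<open>\<tau>\<close> of the i-th child: max of lower bounds of its siblings (Sup {} = -\<infinity>).\<close>
definition tau :: "gtree list \<Rightarrow> nat \<Rightarrow> ereal" where
  "tau cs i = Sup {ereal (vlow (cs ! j)) | j. j < length cs \<and> j \<noteq> i}"

definition beta :: "player \<Rightarrow> gtree list \<Rightarrow> nat \<Rightarrow> ereal" where
  "beta p cs i = (if p = P2 then tau cs i else -\<infinity>)"

fun epf :: "gtree \<Rightarrow> real \<Rightarrow> ereal" where
  "epf (Leaf r1 r2) = (\<lambda>\<mu>. if \<mu> = r2 then ereal r1 else -\<infinity>)"
| "epf (Node p cs) =
     cenv (set (map2 (\<lambda>i u. trunc u (beta p cs i)) [0..<length cs] (map epf cs)))"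

end

theory Submission
  imports Defs
begin

text \<open>For a family of functions that is uniformly bounded above, a box function (a constant
  on a convex set, \<open>-\<infinity>\<close> elsewhere) is a finite concave majorant, while every concave
  majorant stays above the segment joining two points of the hypographs of its members. Hence
  the domain of \<open>cenv G\<close> is the convex hull of the domains of the members of \<open>G\<close>; without the
  upper bound there would be no finite concave majorant and \<open>cenv G\<close> would be \<open>\<infinity>\<close> everywhere.
  At a node, the truncated frontier of child \<open>i\<close> has domain \<open>[max (beta i) (vlow i), vhigh i]\<close>
  by induction. All these intervals lie in \<open>[vlow, vhigh]\<close> of the node (for the follower, a
  child not attaining \<open>vlow\<close> is cut off below at \<open>vlow\<close> by \<open>beta\<close>), while the children
  attaining \<open>vlow\<close> and \<open>vhigh\<close> contribute the two endpoints.\<close>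

lemma cenv_le_concave_majorant:
  assumes "concave_ext h" "\<forall>x. h x < \<infinity>" "\<forall>g\<in>G. \<forall>x. g x \<le> h x"
  shows "cenv G \<mu> \<le> h \<mu>"
  unfolding cenv_def using assms by (auto intro!: Inf_lower)

lemma concave_ext_box:
  assumes "convex I"
  shows "concave_ext (\<lambda>\<mu>. if \<mu> \<in> I then ereal M else -\<infinity>)"
proof -
  have "{(x, r::real). ereal r \<le> (if x \<in> I then ereal M else -\<infinity>)} = I \<times> {..M}"
    by (auto split: if_splits)
  then show ?thesis
    unfolding concave_ext_def using assms by (simp add: convex_Times)
qed

lemma cenv_le_box:
  assumes "convex I"
    and "\<And>g x. g \<in> G \<Longrightarrow> g x \<le> ereal M"
    and "\<And>g x. g \<in> G \<Longrightarrow> x \<notin> I \<Longrightarrow> g x = -\<infinity>"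
  shows "cenv G \<mu> \<le> (if \<mu> \<in> I then ereal M else -\<infinity>)"
  by (rule cenv_le_concave_majorant[OF concave_ext_box[OF assms(1)]]) (use assms in auto)

lemma cenv_ge_min_between:
  assumes "g1 \<in> G" "g2 \<in> G" "ereal c1 \<le> g1 x" "ereal c2 \<le> g2 y" "x \<le> \<mu>" "\<mu> \<le> y"
  shows "ereal (min c1 c2) \<le> cenv G \<mu>"
  unfolding cenv_def
proof (rule Inf_greatest, clarify)
  fix h assume h: "concave_ext h" "\<forall>g\<in>G. \<forall>x. g x \<le> h x"
  define m where "m = min c1 c2"
  define L where "L = {z. ereal m \<le> h z}"
  have hypo: "convex {(x, r::real). ereal r \<le> h x}"
    using h(1) by (simp add: concave_ext_def)
  have "convex L"
  proof (rule convexI)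
    fix z w and u v :: real
    assume "z \<in> L" "w \<in> L" "0 \<le> u" "0 \<le> v" "u + v = 1"
    then have "u *\<^sub>R (z, m) + v *\<^sub>R (w, m) \<in> {(x, r). ereal r \<le> h x}"
      by (intro convexD[OF hypo]) (simp_all add: L_def)
    moreover have "u * m + v * m = m"
      using \<open>u + v = 1\<close> by (metis distrib_right mult_1)
    ultimately show "u *\<^sub>R z + v *\<^sub>R w \<in> L"
      by (simp add: L_def)
  qed
  moreover have "x \<in> L"
  proof -
    have "ereal m \<le> ereal c1" by (simp add: m_def)
    also have "\<dots> \<le> g1 x" by (fact assms(3))
    also have "\<dots> \<le> h x" using h(2) assms(1) by blast
    finally show ?thesis by (simp add: L_def)
  qed
  moreover have "y \<in> L"
  proof -
    have "ereal m \<le> ereal c2" by (simp add: m_def)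
    also have "\<dots> \<le> g2 y" by (fact assms(4))
    also have "\<dots> \<le> h y" using h(2) assms(2) by blast
    finally show ?thesis by (simp add: L_def)
  qed
  ultimately have "\<mu> \<in> L"
    using assms(5,6) is_interval_convex_1 mem_is_interval_1_I by blast
  then show "ereal (min c1 c2) \<le> h \<mu>"
    by (simp add: L_def m_def)
qed

lemma cenv_gt_minf_between:
  assumes "g1 \<in> G" "g2 \<in> G" "-\<infinity> < g1 x" "-\<infinity> < g2 y" "x \<le> \<mu>" "\<mu> \<le> y"
  shows "-\<infinity> < cenv G \<mu>"
proof -
  obtain c1 c2 where "ereal c1 \<le> g1 x" "ereal c2 \<le> g2 y"
    using assms(3,4) by (cases "g1 x"; cases "g2 y") auto
  then have "ereal (min c1 c2) \<le> cenv G \<mu>"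
    using assms by (intro cenv_ge_min_between)
  then show ?thesis
    by (rule less_le_trans[rotated]) simp
qed

lemma trunc_le: "trunc g t \<mu> \<le> g \<mu>"
  by (simp add: trunc_def)

lemma trunc_gt_minf_iff: "-\<infinity> < trunc g t \<mu> \<longleftrightarrow> t \<le> ereal \<mu> \<and> -\<infinity> < g \<mu>"
  by (simp add: trunc_def)

definition child_frontier :: "player \<Rightarrow> gtree list \<Rightarrow> nat \<Rightarrow> real \<Rightarrow> ereal" where
  "child_frontier p cs i = trunc (epf (cs ! i)) (beta p cs i)"

lemma epf_Node_eq: "epf (Node p cs) = cenv (child_frontier p cs ` {..<length cs})"
proof -
  have "map2 (\<lambda>i u. trunc u (beta p cs i)) [0..<length cs] (map epf cs)
      = map (child_frontier p cs) [0..<length cs]"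
    by (rule nth_equalityI) (auto simp: child_frontier_def)
  then show ?thesis
    by (simp add: atLeast0LessThan)
qed

lemma wf_game_states: "wf_game T \<Longrightarrow> s \<in> states T \<Longrightarrow> wf_game s"
  by (induction T) (auto simp: list_all_iff)

lemma vhigh_child_le: "i < length cs \<Longrightarrow> vhigh (cs ! i) \<le> vhigh (Node p cs)"
  by (auto intro: Max_ge)

lemma vhigh_Node_attained:
  assumes "cs \<noteq> []"
  shows "\<exists>j<length cs. vhigh (cs ! j) = vhigh (Node p cs)"
proof -
  have "vhigh (Node p cs) \<in> vhigh ` set cs"
    using assms Max_in[of "vhigh ` set cs"] by simp
  then show ?thesis
    by (auto simp: in_set_conv_nth)
qed

lemma vlow_Node_attained:
  assumes "cs \<noteq> []"
  shows "\<exists>k<length cs. vlow (cs ! k) = vlow (Node p cs)"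
proof -
  have "vlow (Node p cs) \<in> vlow ` set cs"
    using assms Min_in[of "vlow ` set cs"] Max_in[of "vlow ` set cs"] by (cases p) simp_all
  then show ?thesis
    by (auto simp: in_set_conv_nth)
qed

lemma vlow_le_vhigh: "wf_game s \<Longrightarrow> vlow s \<le> vhigh s"
proof (induction s)
  case (Leaf r1 r2)
  then show ?case by simp
next
  case (Node p cs)
  obtain k where k: "k < length cs" "vlow (cs ! k) = vlow (Node p cs)"
    using vlow_Node_attained[of cs p] Node.prems by auto
  have "vlow (Node p cs) = vlow (cs ! k)"
    using k(2) by simp
  also have "\<dots> \<le> vhigh (cs ! k)"
    using Node.IH[OF nth_mem[OF k(1)]] Node.prems k(1) by (simp add: list_all_iff)
  also have "\<dots> \<le> vhigh (Node p cs)"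
    using vhigh_child_le[OF k(1)] .
  finally show ?case .
qed

lemma beta_le_vlow_Node: "beta p cs i \<le> ereal (vlow (Node p cs))"
proof (cases p)
  case P1
  then show ?thesis by (simp add: beta_def)
next
  case P2
  have "vlow (cs ! j) \<le> vlow (Node p cs)" if "j < length cs" for j
    using P2 that by (auto intro: Max_ge)
  then show ?thesis
    using P2 unfolding beta_def tau_def by (auto intro!: Sup_least)
qed

lemma vlow_Node_le:
  assumes "i < length cs" "beta p cs i \<le> ereal \<mu>" "vlow (cs ! i) \<le> \<mu>"
  shows "vlow (Node p cs) \<le> \<mu>"
proof (cases p)
  case P1
  have "Min (vlow ` set cs) \<le> vlow (cs ! i)"
    using assms(1) by (intro Min_le) auto
  then show ?thesis
    using P1 assms(3) by simp
next
  case P2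
  have "cs \<noteq> []"
    using assms(1) by auto
  then obtain k where k: "k < length cs" "vlow (cs ! k) = vlow (Node p cs)"
    using vlow_Node_attained by blast
  show ?thesis
  proof (cases "k = i")
    case True
    then show ?thesis using k assms(3) by simp
  next
    case False
    have "ereal (vlow (cs ! k)) \<le> tau cs i"
      unfolding tau_def using k(1) False by (intro Sup_upper) blast
    also have "\<dots> \<le> ereal \<mu>"
      using P2 assms(2) by (simp add: beta_def)
    finally show ?thesis
      using k(2) by simp
  qed
qed

lemma uniform_upper_bound_finite:
  assumes "finite A" "\<And>a. a \<in> A \<Longrightarrow> \<exists>M. \<forall>x. f a x \<le> ereal M"
  shows "\<exists>M. \<forall>a\<in>A. \<forall>x. f a x \<le> ereal M"
  using assms
proof (induction A rule: finite_induct)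
  case empty
  then show ?case by simp
next
  case (insert a A)
  then obtain M M' where "\<forall>b\<in>A. \<forall>x. f b x \<le> ereal M" "\<forall>x. f a x \<le> ereal M'"
    by blast
  then have "\<forall>b\<in>insert a A. \<forall>x. f b x \<le> ereal (max M M')"
    by (auto simp: le_max_iff_disj)
  then show ?case ..
qed

lemma epf_Node_le_box:
  assumes "convex I" "\<forall>c\<in>set cs. \<forall>\<nu>. epf c \<nu> \<le> ereal M"
    and "\<And>i \<nu>. i < length cs \<Longrightarrow> -\<infinity> < child_frontier p cs i \<nu> \<Longrightarrow> \<nu> \<in> I"
  shows "epf (Node p cs) \<mu> \<le> (if \<mu> \<in> I then ereal M else -\<infinity>)"
proof -
  have bounded: "child_frontier p cs i \<nu> \<le> ereal M" if "i < length cs" for i \<nu>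
  proof -
    have "child_frontier p cs i \<nu> \<le> epf (cs ! i) \<nu>"
      unfolding child_frontier_def by (rule trunc_le)
    also have "\<dots> \<le> ereal M"
      using assms(2) that by simp
    finally show ?thesis .
  qed
  have supported: "child_frontier p cs i \<nu> = -\<infinity>" if "i < length cs" "\<nu> \<notin> I" for i \<nu>
    using assms(3)[OF that(1)] that(2) by force
  show ?thesis
    unfolding epf_Node_eq using bounded supported by (intro cenv_le_box[OF assms(1)]) auto
qed

lemma epf_bounded_above: "wf_game s \<Longrightarrow> \<exists>M. \<forall>\<mu>. epf s \<mu> \<le> ereal M"
proof (induction s)
  case (Leaf r1 r2)
  then show ?case by auto
next
  case (Node p cs)
  then obtain M where "\<forall>c\<in>set cs. \<forall>\<nu>. epf c \<nu> \<le> ereal M"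
    using uniform_upper_bound_finite[of "set cs" epf] by (auto simp: list_all_iff)
  then have "epf (Node p cs) \<mu> \<le> ereal M" for \<mu>
    using epf_Node_le_box[of UNIV cs M p \<mu>] by simp
  then show ?case by blast
qed

lemma epf_children_bounded_above:
  "wf_game (Node p cs) \<Longrightarrow> \<exists>M. \<forall>c\<in>set cs. \<forall>\<nu>. epf c \<nu> \<le> ereal M"
  by (rule uniform_upper_bound_finite) (auto simp: list_all_iff intro: epf_bounded_above)

lemma child_frontier_gt_minf_iff:
  assumes "\<And>\<nu>. -\<infinity> < epf (cs ! i) \<nu> \<longleftrightarrow> vlow (cs ! i) \<le> \<nu> \<and> \<nu> \<le> vhigh (cs ! i)"
  shows "-\<infinity> < child_frontier p cs i \<nu> \<longleftrightarrow>
    beta p cs i \<le> ereal \<nu> \<and> vlow (cs ! i) \<le> \<nu> \<and> \<nu> \<le> vhigh (cs ! i)"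
  unfolding child_frontier_def trunc_gt_minf_iff assms ..

lemma epf_Node_gt_minf_imp:
  assumes "wf_game (Node p cs)"
    and child_dom: "\<And>i \<nu>. i < length cs \<Longrightarrow>
      -\<infinity> < epf (cs ! i) \<nu> \<longleftrightarrow> vlow (cs ! i) \<le> \<nu> \<and> \<nu> \<le> vhigh (cs ! i)"
    and "-\<infinity> < epf (Node p cs) \<mu>"
  shows "vlow (Node p cs) \<le> \<mu> \<and> \<mu> \<le> vhigh (Node p cs)"
proof -
  have child_supp: "\<nu> \<in> {vlow (Node p cs)..vhigh (Node p cs)}"
    if i: "i < length cs" and "-\<infinity> < child_frontier p cs i \<nu>" for i \<nu>
  proof -
    have "beta p cs i \<le> ereal \<nu>" "vlow (cs ! i) \<le> \<nu>" "\<nu> \<le> vhigh (cs ! i)"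
      using that(2) child_frontier_gt_minf_iff[OF child_dom[OF i]] by simp_all
    then show ?thesis
      using vlow_Node_le[OF i] vhigh_child_le[OF i, of p] by simp
  qed
  obtain M where "\<forall>c\<in>set cs. \<forall>\<nu>. epf c \<nu> \<le> ereal M"
    using epf_children_bounded_above[OF assms(1)] ..
  then have "epf (Node p cs) \<mu> \<le>
      (if \<mu> \<in> {vlow (Node p cs)..vhigh (Node p cs)} then ereal M else -\<infinity>)"
    using child_supp by (intro epf_Node_le_box) simp_all
  with assms(3) show ?thesis
    by (simp split: if_splits)
qed

lemma epf_Node_gt_minf_if:
  assumes "wf_game (Node p cs)"
    and child_dom: "\<And>i \<nu>. i < length cs \<Longrightarrow>
      -\<infinity> < epf (cs ! i) \<nu> \<longleftrightarrow> vlow (cs ! i) \<le> \<nu> \<and> \<nu> \<le> vhigh (cs ! i)"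
    and "vlow (Node p cs) \<le> \<mu>" "\<mu> \<le> vhigh (Node p cs)"
  shows "-\<infinity> < epf (Node p cs) \<mu>"
proof -
  have child_attains: "-\<infinity> < child_frontier p cs i \<nu>"
    if i: "i < length cs" and "vlow (Node p cs) \<le> \<nu>" "vlow (cs ! i) \<le> \<nu>" "\<nu> \<le> vhigh (cs ! i)"
    for i \<nu>
  proof -
    have "beta p cs i \<le> ereal (vlow (Node p cs))"
      by (rule beta_le_vlow_Node)
    also have "\<dots> \<le> ereal \<nu>"
      using that(2) by simp
    finally show ?thesis
      using that(3,4) child_frontier_gt_minf_iff[OF child_dom[OF i]] by simp
  qed
  have ne: "cs \<noteq> []"
    using assms(1) by simp
  obtain k where k: "k < length cs" "vlow (cs ! k) = vlow (Node p cs)"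
    using vlow_Node_attained[OF ne] by blast
  obtain j where j: "j < length cs" "vhigh (cs ! j) = vhigh (Node p cs)"
    using vhigh_Node_attained[OF ne] by blast
  have wf_kj: "wf_game (cs ! k)" "wf_game (cs ! j)"
    using assms(1) k(1) j(1) by (simp_all add: list_all_iff)
  have "-\<infinity> < child_frontier p cs k (vlow (Node p cs))"
    using child_attains[OF k(1)] vlow_le_vhigh[OF wf_kj(1)] k(2) by simp
  moreover have "-\<infinity> < child_frontier p cs j (vhigh (Node p cs))"
    using child_attains[OF j(1)] vlow_le_vhigh[OF wf_kj(2)] j(2) assms(3,4) by simp
  ultimately show ?thesis
    unfolding epf_Node_eq using k(1) j(1) assms(3,4)
    by (intro cenv_gt_minf_between[of "child_frontier p cs k" _ "child_frontier p cs j"]) auto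
qed

lemma epf_gt_minf_iff:
  "wf_game s \<Longrightarrow> -\<infinity> < epf s \<mu> \<longleftrightarrow> vlow s \<le> \<mu> \<and> \<mu> \<le> vhigh s"
proof (induction s arbitrary: \<mu>)
  case (Leaf r1 r2)
  then show ?case by auto
next
  case (Node p cs)
  have child_dom: "-\<infinity> < epf (cs ! i) \<nu> \<longleftrightarrow> vlow (cs ! i) \<le> \<nu> \<and> \<nu> \<le> vhigh (cs ! i)"
    if "i < length cs" for i \<nu>
    using Node.IH[OF nth_mem[OF that]] Node.prems that by (simp add: list_all_iff)
  show ?case
    using epf_Node_gt_minf_imp[OF Node.prems child_dom] epf_Node_gt_minf_if[OF Node.prems child_dom]
    by blast
qed

theorem lemma3:
  fixes T s :: gtree
  assumes "wf_game T"
    and "s \<in> states T"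
  shows "{\<mu>::real. epf s \<mu> > -\<infinity>} = {vlow s .. vhigh s}"
  unfolding set_eq_iff mem_Collect_eq atLeastAtMost_iff
  using epf_gt_minf_iff[OF wf_game_states[OF assms]] by blast

end
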